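(* Let $n\ge 3$, $m\ge 2$, and $F,R$ be as in the context. The group $(R\cap[F,F])/[R,F]$ is generated by the images of the elements $[s_i,s_j]$ ($1\le i<j-1\le n-2$), $[s_i,s_{i+1},s_i]$ and $[s_i,s_{i+1},s_is_{i+1}^{-1}]$ ($1\le i\le n-2$), and $[[s_i,s_{i+1}],[s_{i+1},s_{i+2}]]$ ($1\le i\le n-3$).
   Context: Commutator conventions: $[a,b]=a^{-1}b^{-1}ab$, $a^b=b^{-1}ab$, and commutators are left-normed: $[a_1,\dots,a_k]=[[a_1,\dots,a_{k-1}],a_k]$. Let $F$ be the free group on $s_1,\dots,s_{n-1}$ and let $R$ be the normal closure in $F$ of the following relators: $s_i^m$ ($1\le i\le n-1$); $[s_i,s_j]$ ($1\le i<j-1\le n-2$); $[s_i,s_{i+1},s_i]$ and $[s_i,s_{i+1},s_{i+1}]$ ($1\le i\le n-2$); $[[s_i,s_{i+1}],[s_{i+1},s_{i+2}]]$ ($1\le i\le n-3$). It is known that $F/R\cong \mathrm{UT}_n(\mathbb Z/m\mathbb Z)$ via $s_i\mapsto I+E_{i,i+1}$. *)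

theory Defs
  imports "HOL-Algebra.Algebra"
begin

(* Free group on a set of generators S, realised as reduced words.
   A letter (i, False) stands for s_i, (i, True) for s_i^{-1}. *)
type_synonym word = "(nat \<times> bool) list"

fun reduced :: "word \<Rightarrow> bool" where
  "reduced [] = True"
| "reduced [a] = True"
| "reduced (a # b # w) = (\<not> (fst a = fst b \<and> snd a \<noteq> snd b) \<and> reduced (b # w))"

fun push :: "nat \<times> bool \<Rightarrow> word \<Rightarrow> word" where
  "push a [] = [a]"
| "push a (b # w) = (if fst a = fst b \<and> snd a \<noteq> snd b then w else a # b # w)"

definition free_group :: "nat set \<Rightarrow> word monoid" where
  "free_group S = \<lparr> carrier = {w. reduced w \<and> fst ` set w \<subseteq> S},
                    monoid.mult = (\<lambda>u v. foldr push u v),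
                    one = [] \<rparr>"

definition gen :: "nat \<Rightarrow> word" where
  "gen i = [(i, False)]"

definition comm :: "('a, 'b) monoid_scheme \<Rightarrow> 'a \<Rightarrow> 'a \<Rightarrow> 'a" where
  "comm G a b = inv\<^bsub>G\<^esub> a \<otimes>\<^bsub>G\<^esub> inv\<^bsub>G\<^esub> b \<otimes>\<^bsub>G\<^esub> a \<otimes>\<^bsub>G\<^esub> b"

definition normal_closure :: "('a, 'b) monoid_scheme \<Rightarrow> 'a set \<Rightarrow> 'a set" where
  "normal_closure G S = generate G (\<Union>g\<in>carrier G. (\<lambda>y. inv\<^bsub>G\<^esub> g \<otimes>\<^bsub>G\<^esub> y \<otimes>\<^bsub>G\<^esub> g) ` S)"

definition comm_subgroup :: "('a, 'b) monoid_scheme \<Rightarrow> 'a set \<Rightarrow> 'a set \<Rightarrow> 'a set" where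
  "comm_subgroup G A B = generate G {comm G a b | a b. a \<in> A \<and> b \<in> B}"

definition UT_relators :: "nat \<Rightarrow> nat \<Rightarrow> word set" where
  "UT_relators n m =
     {gen i [^]\<^bsub>free_group {1..n-1}\<^esub> m | i. 1 \<le> i \<and> i \<le> n - 1}
   \<union> {comm (free_group {1..n-1}) (gen i) (gen j) | i j. 1 \<le> i \<and> i < j - 1 \<and> j - 1 \<le> n - 2}
   \<union> {comm (free_group {1..n-1}) (comm (free_group {1..n-1}) (gen i) (gen (i+1))) (gen i)
        | i. 1 \<le> i \<and> i \<le> n - 2}
   \<union> {comm (free_group {1..n-1}) (comm (free_group {1..n-1}) (gen i) (gen (i+1))) (gen (i+1))
        | i. 1 \<le> i \<and> i \<le> n - 2}
   \<union> {comm (free_group {1..n-1}) (comm (free_group {1..n-1}) (gen i) (gen (i+1)))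
                                  (comm (free_group {1..n-1}) (gen (i+1)) (gen (i+2)))
        | i. 1 \<le> i \<and> i \<le> n - 3}"

definition UT_gens :: "nat \<Rightarrow> word set" where
  "UT_gens n =
     {comm (free_group {1..n-1}) (gen i) (gen j) | i j. 1 \<le> i \<and> i < j - 1 \<and> j - 1 \<le> n - 2}
   \<union> {comm (free_group {1..n-1}) (comm (free_group {1..n-1}) (gen i) (gen (i+1))) (gen i)
        | i. 1 \<le> i \<and> i \<le> n - 2}
   \<union> {comm (free_group {1..n-1}) (comm (free_group {1..n-1}) (gen i) (gen (i+1)))
          (gen i \<otimes>\<^bsub>free_group {1..n-1}\<^esub> inv\<^bsub>free_group {1..n-1}\<^esub> gen (i+1))
        | i. 1 \<le> i \<and> i \<le> n - 2}
   \<union> {comm (free_group {1..n-1}) (comm (free_group {1..n-1}) (gen i) (gen (i+1)))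
                                  (comm (free_group {1..n-1}) (gen (i+1)) (gen (i+2)))
        | i. 1 \<le> i \<and> i \<le> n - 3}"

end

theory Submission
  imports Defs
begin

text \<open>Let H be the subgroup generated by the listed elements and by [R,F]. The listed elements
  lie in R \<inter> [F,F]: all of them except [s_i,s_{i+1},s_i s_{i+1}^{-1}] are relators, and by
  [c, a b^{-1}] = [c, b^{-1}] [c,a]^{b^{-1}} this one is a product of conjugates of the relators
  [s_i,s_{i+1},s_i] and [s_i,s_{i+1},s_{i+1}]^{-1}. Since H \<subseteq> R, conjugating an element of H
  multiplies it by a commutator in [R,F], so H is normal and R/H is central in F/H. Reading the
  same identity backwards puts [s_i,s_{i+1},s_{i+1}] into H, so every relator is either in H or
  one of the powers s_i^m. Hence every element of R is congruent modulo H to a product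
  (s_1^m)^{k_1} \<cdots> (s_{n-1}^m)^{k_{n-1}}. If it also lies in [F,F], its exponent sum in s_i,
  namely m k_i, vanishes; so all k_i are 0 and the element lies in H.\<close>

section \<open>Commutators and normal closures\<close>

context group begin

lemma mult_inv_cancel_left [simp]: "x \<in> carrier G \<Longrightarrow> y \<in> carrier G \<Longrightarrow> x \<otimes> (inv x \<otimes> y) = y"
  by (simp flip: m_assoc)

lemma inv_mult_cancel_left [simp]: "x \<in> carrier G \<Longrightarrow> y \<in> carrier G \<Longrightarrow> inv x \<otimes> (x \<otimes> y) = y"
  by (simp flip: m_assoc)

lemma comm_closed [intro, simp]:
  "a \<in> carrier G \<Longrightarrow> b \<in> carrier G \<Longrightarrow> comm G a b \<in> carrier G"
  by (simp add: comm_def)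

lemma conj_eq_mult_comm:
  "a \<in> carrier G \<Longrightarrow> g \<in> carrier G \<Longrightarrow> inv g \<otimes> a \<otimes> g = a \<otimes> comm G a g"
  by (simp add: comm_def m_assoc)

lemma comm_mult_right:
  "\<lbrakk>x \<in> carrier G; y \<in> carrier G; z \<in> carrier G\<rbrakk> \<Longrightarrow>
    comm G x (y \<otimes> z) = comm G x z \<otimes> (inv z \<otimes> comm G x y \<otimes> z)"
  by (simp add: comm_def m_assoc inv_mult_group)

lemma comm_inv_right:
  "\<lbrakk>x \<in> carrier G; y \<in> carrier G\<rbrakk> \<Longrightarrow> comm G x (inv y) = y \<otimes> inv (comm G x y) \<otimes> inv y"
  by (simp add: comm_def m_assoc inv_mult_group)

lemma subgroup_mult_mem_iff:
  assumes "subgroup N G" "y \<in> N" "x \<in> carrier G"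
  shows "x \<otimes> y \<in> N \<longleftrightarrow> x \<in> N"
proof
  assume "x \<otimes> y \<in> N"
  then have "x \<otimes> y \<otimes> inv y \<in> N"
    using assms by (simp add: subgroup.m_closed subgroup.m_inv_closed)
  then show "x \<in> N"
    using assms subgroup.mem_carrier[OF assms(1,2)] by (simp add: m_assoc)
qed (use assms in \<open>simp add: subgroup.m_closed\<close>)

lemma subgroup_inv_mem_iff:
  assumes "subgroup N G" "x \<in> carrier G"
  shows "inv x \<in> N \<longleftrightarrow> x \<in> N"
  using assms subgroup.m_inv_closed[OF assms(1), of "inv x"] by (auto simp: subgroup.m_inv_closed)

lemma subgroup_mult_inv_mem_iff:
  assumes "subgroup N G" "x \<in> N" "y \<in> carrier G"
  shows "x \<otimes> inv y \<in> N \<longleftrightarrow> y \<in> N"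
proof -
  have "x \<otimes> inv y \<in> N \<longleftrightarrow> inv (x \<otimes> inv y) \<in> N"
    using assms subgroup.mem_carrier[OF assms(1,2)] by (simp add: subgroup_inv_mem_iff)
  also have "\<dots> \<longleftrightarrow> y \<in> N"
    using assms subgroup.mem_carrier[OF assms(1,2)]
    by (simp add: inv_mult_group subgroup_mult_mem_iff subgroup.m_inv_closed)
  finally show ?thesis .
qed

lemma normal_conj_mem_iff:
  assumes "N \<lhd> G" "g \<in> carrier G" "x \<in> carrier G"
  shows "g \<otimes> x \<otimes> inv g \<in> N \<longleftrightarrow> x \<in> N"
proof
  assume "g \<otimes> x \<otimes> inv g \<in> N"
  then have "inv g \<otimes> (g \<otimes> x \<otimes> inv g) \<otimes> g \<in> N"
    using assms by (simp add: normal.inv_op_closed1)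
  then show "x \<in> N"
    using assms by (simp add: m_assoc)
qed (use assms in \<open>simp add: normal.inv_op_closed2\<close>)

lemma comm_mult_inv_right_mem_iff:
  assumes N: "N \<lhd> G" and carrier: "a \<in> carrier G" "b \<in> carrier G" "c \<in> carrier G"
    and "comm G c a \<in> N"
  shows "comm G c (a \<otimes> inv b) \<in> N \<longleftrightarrow> comm G c b \<in> N"
proof -
  have sub: "subgroup N G"
    using N by (rule normal_imp_subgroup)
  have "comm G c (a \<otimes> inv b) = comm G c (inv b) \<otimes> (b \<otimes> comm G c a \<otimes> inv b)"
    using carrier comm_mult_right[of c a "inv b"] by simp
  moreover have "b \<otimes> comm G c a \<otimes> inv b \<in> N"
    using assms by (simp add: normal.inv_op_closed2)
  moreover have "comm G c (inv b) = b \<otimes> inv (comm G c b) \<otimes> inv b"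
    by (rule comm_inv_right[OF carrier(3,2)])
  ultimately show ?thesis
    using carrier by (simp add: subgroup_mult_mem_iff[OF sub] normal_conj_mem_iff[OF N]
        subgroup_inv_mem_iff[OF sub])
qed

lemma normal_closure_incl: "S \<subseteq> carrier G \<Longrightarrow> S \<subseteq> normal_closure G S"
  unfolding normal_closure_def by (force intro: generate.incl)

lemma normal_normal_closure:
  assumes "S \<subseteq> carrier G"
  shows "normal_closure G S \<lhd> G"
  unfolding normal_closure_def
proof (rule normal_generateI)
  show "(\<Union>g\<in>carrier G. (\<lambda>y. inv g \<otimes> y \<otimes> g) ` S) \<subseteq> carrier G"
    using assms by auto
next
  fix h g assume "h \<in> (\<Union>g\<in>carrier G. (\<lambda>y. inv g \<otimes> y \<otimes> g) ` S)" and g: "g \<in> carrier G"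
  then obtain g' y where g': "g' \<in> carrier G" and y: "y \<in> S" and h: "h = inv g' \<otimes> y \<otimes> g'"
    by blast
  have y_carrier: "y \<in> carrier G"
    using assms y by blast
  have "g \<otimes> h \<otimes> inv g = inv (g' \<otimes> inv g) \<otimes> y \<otimes> (g' \<otimes> inv g)"
    using g g' y_carrier by (simp add: h m_assoc inv_mult_group)
  moreover have "g' \<otimes> inv g \<in> carrier G"
    using g g' by simp
  ultimately show "g \<otimes> h \<otimes> inv g \<in> (\<Union>g\<in>carrier G. (\<lambda>y. inv g \<otimes> y \<otimes> g) ` S)"
    using y by blast
qed

lemma comm_in_comm_subgroup: "a \<in> A \<Longrightarrow> b \<in> B \<Longrightarrow> comm G a b \<in> comm_subgroup G A B"
  unfolding comm_subgroup_def by (blast intro: generate.incl)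

lemma subgroup_comm_subgroup:
  "A \<subseteq> carrier G \<Longrightarrow> B \<subseteq> carrier G \<Longrightarrow> subgroup (comm_subgroup G A B) G"
  unfolding comm_subgroup_def by (rule generate_is_subgroup) blast

lemma comm_subgroup_mono:
  "A \<subseteq> A' \<Longrightarrow> B \<subseteq> B' \<Longrightarrow> comm_subgroup G A B \<subseteq> comm_subgroup G A' B'"
  unfolding comm_subgroup_def by (rule mono_generate) blast

lemma comm_subgroup_subset_normal:
  assumes "N \<lhd> G"
  shows "comm_subgroup G N (carrier G) \<subseteq> N"
proof -
  interpret N: normal N G by fact
  have comm_N: "comm G a g \<in> N" if "a \<in> N" "g \<in> carrier G" for a g
  proof -
    have "comm G a g = inv a \<otimes> (inv g \<otimes> a \<otimes> g)"
      using that by (simp add: conj_eq_mult_comm)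
    then show ?thesis
      using that by (simp add: N.inv_op_closed1)
  qed
  show ?thesis
    unfolding comm_subgroup_def
    by (rule generate_subgroup_incl[OF _ N.subgroup_axioms]) (use comm_N in blast)
qed

lemma normal_generate_Un_comm_subgroup:
  assumes N: "N \<lhd> G" and A: "A \<subseteq> N"
  shows "generate G (A \<union> comm_subgroup G N (carrier G)) \<lhd> G" (is "?K \<lhd> G")
proof -
  interpret N: normal N G by fact
  have gens_N: "A \<union> comm_subgroup G N (carrier G) \<subseteq> N"
    using A comm_subgroup_subset_normal[OF N] by blast
  then have K: "subgroup ?K G"
    by (intro generate_is_subgroup) (use N.subset in blast)
  show ?thesis
  proof (rule normal_invI[OF K])
    fix x h assume x: "x \<in> carrier G" and h: "h \<in> ?K"
    then have "h \<in> N"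
      using generate_subgroup_incl[OF gens_N N.subgroup_axioms] by blast
    then have "comm G h (inv x) \<in> ?K"
      using x by (blast intro: generate.incl comm_in_comm_subgroup)
    moreover have "x \<otimes> h \<otimes> inv x = h \<otimes> comm G h (inv x)"
      using conj_eq_mult_comm[of h "inv x"] x \<open>h \<in> N\<close> by simp
    ultimately show "x \<otimes> h \<otimes> inv x \<in> ?K"
      using h by (simp add: subgroup.m_closed[OF K])
  qed
qed

end

lemma (in group_hom) hom_comm:
  "a \<in> carrier G \<Longrightarrow> b \<in> carrier G \<Longrightarrow> h (comm G a b) = comm H (h a) (h b)"
  by (simp add: comm_def)

lemma (in comm_group) comm_eq_one: "a \<in> carrier G \<Longrightarrow> b \<in> carrier G \<Longrightarrow> comm G a b = \<one>"
  by (simp add: comm_def m_assoc m_lcomm[of "inv b" a])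

lemma (in group_hom) comm_subgroup_subset_kernel:
  assumes "comm_group H"
  shows "comm_subgroup G (carrier G) (carrier G) \<subseteq> kernel G H h"
  unfolding comm_subgroup_def
  by (rule G.generate_subgroup_incl[OF _ subgroup_kernel])
    (auto simp: kernel_def hom_comm comm_group.comm_eq_one[OF assms])

lemma (in group_hom) subgroup_vimage:
  assumes "subgroup K H"
  shows "subgroup (h -` K \<inter> carrier G) G"
proof (rule G.subgroupI)
  fix x assume "x \<in> h -` K \<inter> carrier G"
  then show "inv x \<in> h -` K \<inter> carrier G"
    by (simp add: subgroup.m_inv_closed[OF assms])
next
  fix x y assume "x \<in> h -` K \<inter> carrier G" "y \<in> h -` K \<inter> carrier G"
  then show "x \<otimes>\<^bsub>G\<^esub> y \<in> h -` K \<inter> carrier G"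
    by (simp add: subgroup.m_closed[OF assms])
next
  show "h -` K \<inter> carrier G \<subseteq> carrier G"
    by blast
next
  have "\<one>\<^bsub>G\<^esub> \<in> h -` K \<inter> carrier G"
    using subgroup.one_closed[OF assms] by simp
  then show "h -` K \<inter> carrier G \<noteq> {}"
    by blast
qed

section \<open>Products of powers of central elements\<close>

definition center :: "('a, 'b) monoid_scheme \<Rightarrow> 'a set" where
  "center G = {z \<in> carrier G. \<forall>g \<in> carrier G. z \<otimes>\<^bsub>G\<^esub> g = g \<otimes>\<^bsub>G\<^esub> z}"

lemma centerD: "z \<in> center G \<Longrightarrow> g \<in> carrier G \<Longrightarrow> z \<otimes>\<^bsub>G\<^esub> g = g \<otimes>\<^bsub>G\<^esub> z"
  by (simp add: center_def)

lemma center_carrier: "z \<in> center G \<Longrightarrow> z \<in> carrier G"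
  by (simp add: center_def)

lemma (in group) subgroup_center: "subgroup (center G) G"
proof (rule subgroupI)
  fix z assume z: "z \<in> center G"
  have "inv z \<otimes> g = g \<otimes> inv z" if g: "g \<in> carrier G" for g
  proof -
    have "inv (inv g \<otimes> z) = inv (z \<otimes> inv g)"
      using centerD[OF z, of "inv g"] g by simp
    then show ?thesis
      using g center_carrier[OF z] by (simp add: inv_mult_group)
  qed
  then show "inv z \<in> center G"
    using center_carrier[OF z] by (simp add: center_def)
next
  fix z w assume z: "z \<in> center G" and w: "w \<in> center G"
  note zw_carrier = center_carrier[OF z] center_carrier[OF w]
  have "z \<otimes> w \<otimes> g = g \<otimes> (z \<otimes> w)" if g: "g \<in> carrier G" for g
  proof -
    have "z \<otimes> w \<otimes> g = z \<otimes> (g \<otimes> w)"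
      using centerD[OF w g] zw_carrier g by (simp add: m_assoc)
    also have "\<dots> = g \<otimes> (z \<otimes> w)"
      using centerD[OF z g] zw_carrier g by (simp flip: m_assoc)
    finally show ?thesis .
  qed
  then show "z \<otimes> w \<in> center G"
    using zw_carrier by (simp add: center_def)
qed (auto simp: center_def)

definition power_product :: "('a, 'b) monoid_scheme \<Rightarrow> ('i \<Rightarrow> 'a) \<Rightarrow> ('i \<Rightarrow> int) \<Rightarrow> 'i list \<Rightarrow> 'a" where
  "power_product G y k L = foldr (\<lambda>i p. y i [^]\<^bsub>G\<^esub> k i \<otimes>\<^bsub>G\<^esub> p) L \<one>\<^bsub>G\<^esub>"

lemma power_product_Nil [simp]: "power_product G y k [] = \<one>\<^bsub>G\<^esub>"
  by (simp add: power_product_def)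

lemma power_product_Cons [simp]:
  "power_product G y k (i # L) = y i [^]\<^bsub>G\<^esub> k i \<otimes>\<^bsub>G\<^esub> power_product G y k L"
  by (simp add: power_product_def)

lemma power_product_integer_group: "power_product integer_group y k L = (\<Sum>i\<leftarrow>L. k i * y i)"
  by (induction L) simp_all

context group begin

lemma power_product_mem_subgroup:
  "subgroup K G \<Longrightarrow> y ` set L \<subseteq> K \<Longrightarrow> power_product G y k L \<in> K"
  by (induction L) (auto simp: subgroup.one_closed subgroup.m_closed subgroup_int_pow_closed)

lemma power_product_closed: "y ` set L \<subseteq> carrier G \<Longrightarrow> power_product G y k L \<in> carrier G"
  by (rule power_product_mem_subgroup[OF subgroup_self])

lemma power_product_zero: "\<forall>i \<in> set L. k i = 0 \<Longrightarrow> power_product G y k L = \<one>"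
  by (induction L) auto

lemma power_product_indicator:
  assumes "distinct L" "i \<in> set L" "y ` set L \<subseteq> carrier G"
  shows "power_product G y (\<lambda>j. if j = i then 1 else 0) L = y i"
  using assms
proof (induction L)
  case (Cons j L)
  show ?case
  proof (cases "j = i")
    case True
    then have "power_product G y (\<lambda>j. if j = i then 1 else 0) L = \<one>"
      using Cons.prems(1) by (intro power_product_zero) auto
    then show ?thesis
      using True Cons.prems(3) by simp
  next
    case False
    then show ?thesis
      using Cons by (simp add: image_subset_iff)
  qed
qed simp

lemma power_product_add:
  assumes "y ` set L \<subseteq> center G"
  shows "power_product G y k L \<otimes> power_product G y k' L = power_product G y (\<lambda>i. k i + k' i) L"
  using assms
proof (induction L)
  case (Cons i L)
  let ?P = "power_product G y k L" and ?P' = "power_product G y k' L"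
  have y_L: "y ` set L \<subseteq> center G" and y_i: "y i \<in> center G"
    using Cons.prems by auto
  have P: "?P \<in> center G"
    by (rule power_product_mem_subgroup[OF subgroup_center y_L])
  have P': "?P' \<in> center G"
    by (rule power_product_mem_subgroup[OF subgroup_center y_L])
  note carrier = center_carrier[OF y_i] center_carrier[OF P] center_carrier[OF P']
  have "power_product G y k (i # L) \<otimes> power_product G y k' (i # L)
      = y i [^] k i \<otimes> (?P \<otimes> y i [^] k' i) \<otimes> ?P'"
    using carrier by (simp add: m_assoc)
  also have "\<dots> = y i [^] k i \<otimes> (y i [^] k' i \<otimes> ?P) \<otimes> ?P'"
    using centerD[OF P, of "y i [^] k' i"] carrier by simp
  also have "\<dots> = y i [^] k i \<otimes> y i [^] k' i \<otimes> (?P \<otimes> ?P')"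
    using carrier by (simp add: m_assoc)
  also have "\<dots> = power_product G y (\<lambda>i. k i + k' i) (i # L)"
    using Cons.IH[OF y_L] carrier by (simp add: int_pow_mult)
  finally show ?case .
qed simp

lemma subgroup_power_products:
  assumes "y ` set L \<subseteq> center G"
  shows "subgroup (range (\<lambda>k. power_product G y k L)) G"
proof (rule subgroupI)
  have y: "y ` set L \<subseteq> carrier G"
    using assms subgroup.subset[OF subgroup_center] by blast
  show "range (\<lambda>k. power_product G y k L) \<subseteq> carrier G"
    using power_product_closed[OF y] by blast
  show "range (\<lambda>k. power_product G y k L) \<noteq> {}"
    by blast
  fix x assume "x \<in> range (\<lambda>k. power_product G y k L)"
  then obtain k where x: "x = power_product G y k L"
    by blast
  have "power_product G y (\<lambda>i. - k i) L \<otimes> x = \<one>"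
    using power_product_add[OF assms] power_product_zero[of L "\<lambda>_. 0"] by (simp add: x)
  then have "inv x = power_product G y (\<lambda>i. - k i) L"
    using power_product_closed[OF y] by (simp add: x inv_equality)
  then show "inv x \<in> range (\<lambda>k. power_product G y k L)"
    by simp
next
  fix x x' assume "x \<in> range (\<lambda>k. power_product G y k L)" "x' \<in> range (\<lambda>k. power_product G y k L)"
  then show "x \<otimes> x' \<in> range (\<lambda>k. power_product G y k L)"
    using power_product_add[OF assms] by auto
qed

end

lemma (in group_hom) hom_power_product:
  assumes "y ` set L \<subseteq> carrier G"
  shows "h (power_product G y k L) = power_product H (h \<circ> y) k L"
  using assms by (induction L) (auto simp: G.power_product_closed hom_int_pow)

lemma (in normal) rcos_conj_eq:
  assumes "x \<in> carrier G" "g \<in> carrier G" "comm G x g \<in> H"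
  shows "H #> (inv g \<otimes> x \<otimes> g) = H #> x"
proof -
  interpret Q: group "G Mod H"
    by (rule factorgroup_is_group)
  have "H #> (inv g \<otimes> x \<otimes> g) = (H #> x) <#> (H #> comm G x g)"
    using assms by (simp add: conj_eq_mult_comm rcos_sum)
  also have "\<dots> = (H #> x) \<otimes>\<^bsub>G Mod H\<^esub> \<one>\<^bsub>G Mod H\<^esub>"
    using assms by (simp add: rcos_const is_group)
  also have "\<dots> = H #> x"
    using assms by (simp add: carrier_FactGroup del: mult_FactGroup one_FactGroup)
  finally show ?thesis .
qed

lemma (in normal) rcos_in_center:
  assumes x: "x \<in> carrier G" and comm_x: "\<And>g. g \<in> carrier G \<Longrightarrow> comm G x g \<in> H"
  shows "H #> x \<in> center (G Mod H)"
proof -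
  have "(H #> x) <#> (H #> g) = (H #> g) <#> (H #> x)" if g: "g \<in> carrier G" for g
  proof -
    have "(H #> x) <#> (H #> g) = (H #> g) <#> (H #> (inv g \<otimes> x \<otimes> g))"
      using x g by (simp add: rcos_sum m_assoc)
    then show ?thesis
      using rcos_conj_eq[OF x g comm_x[OF g]] by simp
  qed
  then show ?thesis
    using x by (auto simp: center_def carrier_FactGroup)
qed

lemma (in group) normal_closure_mod_power_product:
  assumes H: "H \<lhd> G" and S: "S \<subseteq> carrier G"
    and central: "comm_subgroup G (normal_closure G S) (carrier G) \<subseteq> H"
    and y_S: "y ` set L \<subseteq> S" and S_cases: "S \<subseteq> H \<union> y ` set L" and L: "distinct L"
    and r: "r \<in> normal_closure G S"
  obtains k where "r \<otimes> inv (power_product G y k L) \<in> H"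
proof -
  interpret H: normal H G by fact
  interpret Q: group "G Mod H"
    by (rule H.factorgroup_is_group)
  define q where "q x = H #> x" for x
  interpret q: group_hom G "G Mod H" q
    using H.r_coset_hom_Mod by unfold_locales (simp add: q_def[abs_def])
  let ?N = "normal_closure G S"
  have N: "subgroup ?N G"
    using normal_normal_closure[OF S] by (rule normal_imp_subgroup)
  have y: "y ` set L \<subseteq> carrier G"
    using y_S S by blast
  have comm_H: "comm G x g \<in> H" if "x \<in> ?N" "g \<in> carrier G" for x g
    using that central by (blast intro: comm_in_comm_subgroup)
  have y_N: "y ` set L \<subseteq> ?N"
    using y_S normal_closure_incl[OF S] by blast
  have qy: "(q \<circ> y) ` set L \<subseteq> center (G Mod H)"
    using y y_N by (auto simp: q_def intro!: H.rcos_in_center comm_H)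
  \<comment> \<open>The cosets of power products form a subgroup of the quotient (the factors are central
    there), and it contains the coset of every conjugate of an element of S.\<close>
  let ?P = "range (\<lambda>k. power_product (G Mod H) (q \<circ> y) k L)"
  have conj_in_P: "inv g \<otimes> x \<otimes> g \<in> q -` ?P \<inter> carrier G" if g: "g \<in> carrier G" and x: "x \<in> S" for g x
  proof -
    from S_cases x consider "x \<in> H" | i where "i \<in> set L" "x = y i"
      by blast
    then have "q x \<in> ?P"
    proof cases
      case 1
      then have "q x = power_product (G Mod H) (q \<circ> y) (\<lambda>_. 0) L"
        by (simp add: q_def H.rcos_const is_group Q.power_product_zero)
      then show ?thesis
        by blast
    next
      case (2 i)
      then have "q x = power_product (G Mod H) (q \<circ> y) (\<lambda>j. if j = i then 1 else 0) L"
        using Q.power_product_indicator[OF L] qy subgroup.subset[OF Q.subgroup_center] by auto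
      then show ?thesis
        by blast
    qed
    moreover have "x \<in> ?N" "x \<in> carrier G"
      using x S normal_closure_incl[OF S] by blast+
    then have "q (inv g \<otimes> x \<otimes> g) = q x"
      unfolding q_def by (intro H.rcos_conj_eq g comm_H)
    ultimately show ?thesis
      using S g x by auto
  qed
  have "?N \<subseteq> q -` ?P \<inter> carrier G"
    unfolding normal_closure_def
    by (rule generate_subgroup_incl[OF _ q.subgroup_vimage[OF Q.subgroup_power_products[OF qy]]])
      (use conj_in_P in blast)
  then obtain k where "q r = power_product (G Mod H) (q \<circ> y) k L"
    using r by blast
  also have "\<dots> = q (power_product G y k L)"
    using q.hom_power_product[OF y] by simp
  finally have "H #> r = H #> power_product G y k L"
    by (simp add: q_def)
  then have "r \<in> H #> power_product G y k L"
    using rcos_self[OF subgroup.mem_carrier[OF N r] H.subgroup_axioms] by simp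
  then show thesis
    using H.rcos_module_imp[OF is_group power_product_closed[OF y]] that by blast
qed

section \<open>Free groups and exponent sums\<close>

definition letter_inv :: "nat \<times> bool \<Rightarrow> nat \<times> bool" where
  "letter_inv a = (fst a, \<not> snd a)"

definition word_inv :: "word \<Rightarrow> word" where
  "word_inv u = rev (map letter_inv u)"

lemma letter_inv_letter_inv [simp]: "letter_inv (letter_inv a) = a"
  by (simp add: letter_inv_def)

lemma push_eq_case:
  "push a w = (case w of [] \<Rightarrow> [a] | b # w' \<Rightarrow> if b = letter_inv a then w' else a # w)"
  by (cases w) (auto simp: letter_inv_def prod_eq_iff)

lemma reduced_ConsD: "reduced (a # w) \<Longrightarrow> reduced w"
  by (cases w) auto

lemma reduced_push: "reduced w \<Longrightarrow> reduced (push a w)"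
  by (cases w) (auto dest: reduced_ConsD)

lemma push_letter_inv_push: "reduced w \<Longrightarrow> push (letter_inv a) (push a w) = w"
  by (cases w rule: reduced.cases) (auto simp: letter_inv_def prod_eq_iff)

lemma fst_set_push: "fst ` set (push a w) \<subseteq> insert (fst a) (fst ` set w)"
  by (cases w) auto

lemma reduced_foldr_push: "reduced v \<Longrightarrow> reduced (foldr push u v)"
  by (induction u) (auto intro: reduced_push)

lemma fst_set_foldr_push: "fst ` set (foldr push u v) \<subseteq> fst ` set u \<union> fst ` set v"
proof (induction u)
  case (Cons a u)
  have "fst ` set (foldr push (a # u) v) \<subseteq> insert (fst a) (fst ` set (foldr push u v))"
    using fst_set_push by simp
  then show ?case
    using Cons.IH by auto
qed simp

lemma foldr_push_Nil: "reduced u \<Longrightarrow> foldr push u [] = u"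
proof (induction u)
  case (Cons a u)
  then have "foldr push (a # u) [] = push a u"
    by (simp add: reduced_ConsD)
  also have "\<dots> = a # u"
    using Cons.prems by (cases u) auto
  finally show ?case .
qed simp

lemma foldr_push_push:
  "reduced w \<Longrightarrow> reduced v \<Longrightarrow> foldr push (push a w) v = push a (foldr push w v)"
proof (cases w)
  case (Cons b w')
  assume "reduced w" "reduced v"
  show ?thesis
  proof (cases "b = letter_inv a")
    case True
    have "push a (foldr push w v) = push (letter_inv b) (push b (foldr push w' v))"
      using Cons True by simp
    also have "\<dots> = foldr push w' v"
      using \<open>reduced v\<close> by (simp add: push_letter_inv_push reduced_foldr_push)
    finally show ?thesis
      using Cons True by (simp add: push_eq_case)
  next
    case False
    then show ?thesis
      using Cons by (simp add: push_eq_case)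
  qed
qed simp

lemma foldr_push_assoc:
  "reduced v \<Longrightarrow> reduced w \<Longrightarrow> foldr push (foldr push u v) w = foldr push u (foldr push v w)"
  by (induction u) (auto simp: foldr_push_push reduced_foldr_push)

lemma foldr_push_word_inv: "reduced v \<Longrightarrow> foldr push (word_inv u) (foldr push u v) = v"
  by (induction u arbitrary: v) (auto simp: word_inv_def push_letter_inv_push reduced_foldr_push)

lemma free_group_carrier: "carrier (free_group S) = {w. reduced w \<and> fst ` set w \<subseteq> S}"
  by (simp add: free_group_def)

lemma free_group_mult: "u \<otimes>\<^bsub>free_group S\<^esub> v = foldr push u v"
  by (simp add: free_group_def)

lemma free_group_one: "\<one>\<^bsub>free_group S\<^esub> = []"
  by (simp add: free_group_def)

lemma group_free_group: "group (free_group S)"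
proof (rule groupI)
  fix x y assume "x \<in> carrier (free_group S)" "y \<in> carrier (free_group S)"
  then have "fst ` set x \<subseteq> S" "fst ` set y \<subseteq> S" "reduced y"
    by (simp_all add: free_group_carrier)
  then have "fst ` set (foldr push x y) \<subseteq> S" "reduced (foldr push x y)"
    using fst_set_foldr_push[of x y] by (blast, simp add: reduced_foldr_push)
  then show "x \<otimes>\<^bsub>free_group S\<^esub> y \<in> carrier (free_group S)"
    by (simp add: free_group_carrier free_group_mult)
next
  fix x assume x: "x \<in> carrier (free_group S)"
  define y where "y = foldr push (word_inv x) []"
  have "fst ` set (word_inv x) = fst ` set x"
    by (force simp: word_inv_def letter_inv_def)
  moreover have "fst ` set x \<subseteq> S"
    using x by (simp add: free_group_carrier)
  ultimately have "fst ` set y \<subseteq> S"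
    using fst_set_foldr_push[of "word_inv x" "[]"] unfolding y_def by simp
  then have "y \<in> carrier (free_group S)"
    by (simp add: free_group_carrier y_def reduced_foldr_push)
  moreover have "y \<otimes>\<^bsub>free_group S\<^esub> x = \<one>\<^bsub>free_group S\<^esub>"
    using x foldr_push_word_inv[of "[]" x]
    by (simp add: y_def free_group_carrier free_group_mult free_group_one foldr_push_assoc foldr_push_Nil)
  ultimately show "\<exists>y \<in> carrier (free_group S). y \<otimes>\<^bsub>free_group S\<^esub> x = \<one>\<^bsub>free_group S\<^esub>"
    by blast
qed (auto simp: free_group_carrier free_group_mult free_group_one foldr_push_assoc)

lemma gen_in_carrier: "i \<in> S \<Longrightarrow> gen i \<in> carrier (free_group S)"
  by (simp add: gen_def free_group_carrier)

definition exponent_sum :: "nat \<Rightarrow> word \<Rightarrow> int" where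
  "exponent_sum j w = (\<Sum>a\<leftarrow>w. if fst a = j then (if snd a then -1 else 1) else 0)"

lemma exponent_sum_Cons: "exponent_sum j (a # w) = exponent_sum j [a] + exponent_sum j w"
  by (simp add: exponent_sum_def)

lemma exponent_sum_push: "exponent_sum j (push a w) = exponent_sum j [a] + exponent_sum j w"
  by (cases w) (auto simp: exponent_sum_def)

lemma exponent_sum_hom: "exponent_sum j \<in> hom (free_group S) integer_group"
proof (rule homI)
  show "exponent_sum j (x \<otimes>\<^bsub>free_group S\<^esub> y) = exponent_sum j x \<otimes>\<^bsub>integer_group\<^esub> exponent_sum j y" for x y
  proof (induction x)
    case (Cons a x)
    then show ?case
      using exponent_sum_Cons[of j a x] by (simp add: free_group_mult exponent_sum_push)
  qed (simp add: free_group_mult exponent_sum_def)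
qed simp

lemma exponent_sum_gen: "exponent_sum j (gen i) = (if i = j then 1 else 0)"
  by (simp add: exponent_sum_def gen_def)

lemma group_hom_exponent_sum: "group_hom (free_group S) integer_group (exponent_sum j)"
  by (simp add: group_hom_def group_hom_axioms_def group_free_group exponent_sum_hom)

lemma exponent_sum_comm_subgroup:
  assumes "x \<in> comm_subgroup (free_group S) (carrier (free_group S)) (carrier (free_group S))"
  shows "exponent_sum j x = 0"
  using group_hom.comm_subgroup_subset_kernel[OF group_hom_exponent_sum abelian_integer_group] assms
  by (auto simp: kernel_def)

lemma exponent_sum_power_product_gen_pow:
  assumes "distinct L" "set L \<subseteq> S" "j \<in> set L"
  shows "exponent_sum j (power_product (free_group S) (\<lambda>i. gen i [^]\<^bsub>free_group S\<^esub> m) k L)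
    = k j * int m"
proof -
  interpret e: group_hom "free_group S" integer_group "exponent_sum j"
    by (rule group_hom_exponent_sum)
  have gen_pow: "exponent_sum j (gen i [^]\<^bsub>free_group S\<^esub> m) = (if i = j then int m else 0)"
    if "i \<in> S" for i
    using that by (simp add: e.hom_nat_pow gen_in_carrier exponent_sum_gen)
  have "(\<lambda>i. gen i [^]\<^bsub>free_group S\<^esub> m) ` set L \<subseteq> carrier (free_group S)"
    using assms(2) by (auto intro: gen_in_carrier)
  then have "exponent_sum j (power_product (free_group S) (\<lambda>i. gen i [^]\<^bsub>free_group S\<^esub> m) k L)
      = (\<Sum>i\<leftarrow>L. k i * exponent_sum j (gen i [^]\<^bsub>free_group S\<^esub> m))"
    by (simp add: e.hom_power_product power_product_integer_group)
  also have "\<dots> = (\<Sum>i \<in> set L. k i * exponent_sum j (gen i [^]\<^bsub>free_group S\<^esub> m))"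
    using assms(1) by (simp add: sum_list_distinct_conv_sum_set)
  also have "\<dots> = (\<Sum>i \<in> set L. if i = j then k i * int m else 0)"
    using assms(2) gen_pow by (intro sum.cong) auto
  also have "\<dots> = k j * int m"
    using assms(3) by simp
  finally show ?thesis .
qed

lemma power_product_gen_pow_eq_one:
  fixes m :: nat
  assumes "m \<noteq> 0" "distinct L" "set L \<subseteq> S"
    and "power_product (free_group S) (\<lambda>i. gen i [^]\<^bsub>free_group S\<^esub> m) k L
      \<in> comm_subgroup (free_group S) (carrier (free_group S)) (carrier (free_group S))"
  shows "power_product (free_group S) (\<lambda>i. gen i [^]\<^bsub>free_group S\<^esub> m) k L = \<one>\<^bsub>free_group S\<^esub>"
proof -
  have "k j = 0" if "j \<in> set L" for j
    using exponent_sum_comm_subgroup[OF assms(4), of j]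
      exponent_sum_power_product_gen_pow[OF assms(2,3) that, of m k] assms(1)
    by simp
  then show ?thesis
    by (simp add: group.power_product_zero[OF group_free_group])
qed

section \<open>The relators of the unitriangular group\<close>

lemma UT_relators_subset_carrier: "UT_relators n m \<subseteq> carrier (free_group {1..n-1})"
proof
  interpret F: group "free_group {1..n-1}"
    by (rule group_free_group)
  have gen: "gen i \<in> carrier (free_group {1..n-1})" if "1 \<le> i" "i \<le> n - 1" for i
    using that by (simp add: gen_in_carrier)
  fix x assume "x \<in> UT_relators n m"
  then show "x \<in> carrier (free_group {1..n-1})"
    unfolding UT_relators_def
    by (elim UnE CollectE exE conjE; simp only:; intro F.comm_closed F.nat_pow_closed gen; linarith)
qed

lemma UT_gens_subset_comm_subgroup:
  "UT_gens n \<subseteq>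
    comm_subgroup (free_group {1..n-1}) (carrier (free_group {1..n-1})) (carrier (free_group {1..n-1}))"
proof
  interpret F: group "free_group {1..n-1}"
    by (rule group_free_group)
  have gen: "gen i \<in> carrier (free_group {1..n-1})" if "1 \<le> i" "i \<le> n - 1" for i
    using that by (simp add: gen_in_carrier)
  fix x assume "x \<in> UT_gens n"
  then show "x \<in> comm_subgroup (free_group {1..n-1}) (carrier (free_group {1..n-1})) (carrier (free_group {1..n-1}))"
    unfolding UT_gens_def
    by (elim UnE CollectE exE conjE; simp only:;
        intro F.comm_in_comm_subgroup F.comm_closed F.m_closed F.inv_closed gen; linarith)
qed

lemma UT_gens_subset_normal_closure:
  "UT_gens n \<subseteq> normal_closure (free_group {1..n-1}) (UT_relators n m)"
proof
  let ?F = "free_group {1..n-1}"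
  let ?R = "normal_closure ?F (UT_relators n m)"
  interpret F: group ?F
    by (rule group_free_group)
  have R: "?R \<lhd> ?F"
    by (rule F.normal_normal_closure[OF UT_relators_subset_carrier])
  have relators: "UT_relators n m \<subseteq> ?R"
    by (rule F.normal_closure_incl[OF UT_relators_subset_carrier])
  fix x assume "x \<in> UT_gens n"
  then consider "x \<in> UT_relators n m"
    | i where "1 \<le> i" "i \<le> n - 2"
        "x = comm ?F (comm ?F (gen i) (gen (i+1))) (gen i \<otimes>\<^bsub>?F\<^esub> inv\<^bsub>?F\<^esub> gen (i+1))"
    unfolding UT_gens_def UT_relators_def by blast
  then show "x \<in> ?R"
  proof cases
    case 1
    then show ?thesis
      using relators by blast
  next
    case 2
    have gens: "gen i \<in> carrier ?F" "gen (i+1) \<in> carrier ?F"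
      using 2 by (simp_all add: gen_in_carrier)
    have "comm ?F (comm ?F (gen i) (gen (i+1))) (gen i) \<in> ?R"
      and "comm ?F (comm ?F (gen i) (gen (i+1))) (gen (i+1)) \<in> ?R"
      using 2 relators unfolding UT_relators_def by blast+
    with 2 show ?thesis
      using F.comm_mult_inv_right_mem_iff[OF R gens F.comm_closed[OF gens]] by blast
  qed
qed

lemma UT_powers_subset_relators:
  "(\<lambda>i. gen i [^]\<^bsub>free_group {1..n-1}\<^esub> m) ` set [1..<n] \<subseteq> UT_relators n m"
proof
  fix x assume "x \<in> (\<lambda>i. gen i [^]\<^bsub>free_group {1..n-1}\<^esub> m) ` set [1..<n]"
  then obtain i where "1 \<le> i" "i \<le> n - 1" "x = gen i [^]\<^bsub>free_group {1..n-1}\<^esub> m"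
    by auto
  then show "x \<in> UT_relators n m"
    unfolding UT_relators_def by blast
qed

lemma UT_relators_subset_Un_powers:
  assumes N: "N \<lhd> free_group {1..n-1}" and gens: "UT_gens n \<subseteq> N"
  shows "UT_relators n m \<subseteq> N \<union> (\<lambda>i. gen i [^]\<^bsub>free_group {1..n-1}\<^esub> m) ` set [1..<n]"
proof
  let ?F = "free_group {1..n-1}"
  interpret F: group ?F
    by (rule group_free_group)
  fix x assume "x \<in> UT_relators n m"
  then consider
      i where "1 \<le> i" "i \<le> n - 1" "x = gen i [^]\<^bsub>?F\<^esub> m"
    | "x \<in> UT_gens n"
    | i where "1 \<le> i" "i \<le> n - 2" "x = comm ?F (comm ?F (gen i) (gen (i+1))) (gen (i+1))"
    unfolding UT_relators_def UT_gens_def by blast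
  then show "x \<in> N \<union> (\<lambda>i. gen i [^]\<^bsub>?F\<^esub> m) ` set [1..<n]"
  proof cases
    case 1
    then show ?thesis
      by auto
  next
    case 2
    then show ?thesis
      using gens by blast
  next
    case 3
    have gens_i: "gen i \<in> carrier ?F" "gen (i+1) \<in> carrier ?F"
      using 3 by (simp_all add: gen_in_carrier)
    have "comm ?F (comm ?F (gen i) (gen (i+1))) (gen i) \<in> N"
      and "comm ?F (comm ?F (gen i) (gen (i+1))) (gen i \<otimes>\<^bsub>?F\<^esub> inv\<^bsub>?F\<^esub> gen (i+1)) \<in> N"
      using 3 gens unfolding UT_gens_def by blast+
    with 3 show ?thesis
      using F.comm_mult_inv_right_mem_iff[OF N gens_i F.comm_closed[OF gens_i]] by blast
  qed
qed

lemma UT_normal_closure_inter_comm_subgroup_subset: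
  fixes n m :: nat
  defines "F \<equiv> free_group {1..n-1}"
  defines "R \<equiv> normal_closure F (UT_relators n m)"
  assumes "m \<noteq> 0" and N: "N \<lhd> F" and gens: "UT_gens n \<subseteq> N"
    and central: "comm_subgroup F R (carrier F) \<subseteq> N"
    and N_commutators: "N \<subseteq> comm_subgroup F (carrier F) (carrier F)"
  shows "R \<inter> comm_subgroup F (carrier F) (carrier F) \<subseteq> N"
proof
  let ?C = "comm_subgroup F (carrier F) (carrier F)"
  let ?y = "\<lambda>i. gen i [^]\<^bsub>F\<^esub> m"
  interpret F: group F
    unfolding F_def by (rule group_free_group)
  fix r assume r: "r \<in> R \<inter> ?C"
  have relators: "UT_relators n m \<subseteq> carrier F"
    unfolding F_def by (rule UT_relators_subset_carrier)
  have powers: "?y ` set [1..<n] \<subseteq> UT_relators n m"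
    unfolding F_def by (rule UT_powers_subset_relators)
  have "UT_relators n m \<subseteq> N \<union> ?y ` set [1..<n]"
    using N gens unfolding F_def by (rule UT_relators_subset_Un_powers)
  then obtain k where rk: "r \<otimes>\<^bsub>F\<^esub> inv\<^bsub>F\<^esub> power_product F ?y k [1..<n] \<in> N"
    using F.normal_closure_mod_power_product[OF N relators _ powers _ distinct_upt] central r
    unfolding R_def by blast
  have C: "subgroup ?C F"
    by (rule F.subgroup_comm_subgroup) auto
  have "power_product F ?y k [1..<n] \<in> carrier F"
    using powers relators by (intro F.power_product_closed) blast
  then have "power_product F ?y k [1..<n] \<in> ?C"
    using F.subgroup_mult_inv_mem_iff[OF C] r rk N_commutators by blast
  then have "power_product F ?y k [1..<n] = \<one>\<^bsub>F\<^esub>"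
    unfolding F_def by (intro power_product_gen_pow_eq_one[OF \<open>m \<noteq> 0\<close> distinct_upt]) auto
  then show "r \<in> N"
    using rk r subgroup.mem_carrier[OF C] by simp
qed

theorem mainTheorem2:
  fixes n m :: nat
  assumes "n \<ge> 3" and "m \<ge> 2"
  defines "F \<equiv> free_group {1..n-1}"
  defines "R \<equiv> normal_closure F (UT_relators n m)"
  shows "UT_gens n \<subseteq> R \<inter> comm_subgroup F (carrier F) (carrier F)
       \<and> generate F (UT_gens n \<union> comm_subgroup F R (carrier F))
           = R \<inter> comm_subgroup F (carrier F) (carrier F)"
proof -
  let ?C = "comm_subgroup F (carrier F) (carrier F)"
  let ?H = "generate F (UT_gens n \<union> comm_subgroup F R (carrier F))"
  interpret F: group F
    unfolding F_def by (rule group_free_group)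
  have relators: "UT_relators n m \<subseteq> carrier F"
    unfolding F_def by (rule UT_relators_subset_carrier)
  have R: "R \<lhd> F"
    unfolding R_def by (rule F.normal_normal_closure[OF relators])
  have gens: "UT_gens n \<subseteq> R \<inter> ?C"
    using UT_gens_subset_normal_closure UT_gens_subset_comm_subgroup unfolding R_def F_def by blast
  have "comm_subgroup F R (carrier F) \<subseteq> R \<inter> ?C"
    using F.comm_subgroup_subset_normal[OF R] F.comm_subgroup_mono[of R "carrier F"]
      normal_imp_subgroup[OF R, THEN subgroup.subset] by blast
  then have H_subset: "?H \<subseteq> R \<inter> ?C"
    using gens normal_imp_subgroup[OF R] F.subgroup_comm_subgroup[of "carrier F" "carrier F"]
    by (intro F.generate_subgroup_incl F.subgroups_Inter_pair) auto
  have H: "?H \<lhd> F"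
    using F.normal_generate_Un_comm_subgroup[OF R] gens by blast
  have "m \<noteq> 0"
    using \<open>m \<ge> 2\<close> by simp
  moreover have "UT_gens n \<union> comm_subgroup F R (carrier F) \<subseteq> ?H"
    by (blast intro: generate.incl)
  ultimately have "R \<inter> ?C \<subseteq> ?H"
    using UT_normal_closure_inter_comm_subgroup_subset[of m ?H n] H H_subset
    unfolding R_def F_def by blast
  with gens H_subset show ?thesis
    by blast
qed

end
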